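(* A game $\Gamma=(N,A,u)$ is standard symmetric if and only if there exist a matching $M$ of the strategy sets $(A_i)_{i\in N}$ and a transitive subgroup $H$ of $S_N$ such that for every $\pi\in H$ the induced game bijection $M_\pi$ is an automorphism of $\Gamma$.
   Context: A (finite normal-form) game $\Gamma=(N,A,u)$ consists of a finite set $N$ of $n\ge 2$ players, a finite non-empty strategy set $A_i$ for each $i\in N$ (all of the same cardinality), $A=\times_{i\in N}A_i$, and utility functions $u_i:A\to\mathbb{R}$. A game bijection $g=(\pi;(\tau_i)_{i\in N})$ of $\Gamma$ to itself consists of a permutation $\pi$ of $N$ and bijections $\tau_i:A_i\to A_{\pi(i)}$; $g.i=\pi(i)$, $g.s_i=\tau_i(s_i)$, and $g.s$ is the profile with $(g.s)_{\pi(i)}=\tau_i(s_i)$. An automorphism is a game bijection with $u_i(s)=u_{g.i}(g.s)$ for all $i,s$; $\operatorname{Aut}(\Gamma)$ is the group of automorphisms. A symmetry group is a subgroup $G\le\operatorname{Aut}(\Gamma)$; the stabiliser of player $i$ is $G_i=\{g\in G:g.i=i\}$. $G$ is player transitive if for all $i,j\in N$ some $g\in G$ has $g.i=j$; $G$ is strategy trivial if for every $i\in N$ and every $g\in G_i$, $g.s_i=s_i$ for all $s_i\in A_i$. $\Gamma$ is standard symmetric if it has a player transitive and strategy trivial symmetry group. A matching of $A_1,\dots,A_n$ is a set $M\subseteq\times_iA_i$ of $n$-tuples such that every element of every $A_i$ appears in exactly one tuple of $M$; it induces bijections $M_{ij}:A_i\to A_j$ sending $a_i$ to the $j$-th entry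 of the unique tuple containing $a_i$. For $\pi\in S_N$, $M_\pi$ denotes the game bijection $(\pi;(M_{i\pi(i)})_{i\in N})$. *)

theory Defs
  imports Complex_Main "HOL-Combinatorics.Permutations"
begin

text \<open>Profiles are the extensional functions in PiE N A.\<close>

definition game :: "'p set \<Rightarrow> ('p \<Rightarrow> 's set) \<Rightarrow> ('p \<Rightarrow> ('p \<Rightarrow> 's) \<Rightarrow> real) \<Rightarrow> bool" where
  "game N A u \<longleftrightarrow> finite N \<and> card N \<ge> 2 \<and>
     (\<forall>i\<in>N. finite (A i) \<and> A i \<noteq> {}) \<and>
     (\<forall>i\<in>N. \<forall>j\<in>N. card (A i) = card (A j))"

type_synonym ('p, 's) gbij = "('p \<Rightarrow> 'p) \<times> ('p \<Rightarrow> 's \<Rightarrow> 's)"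

definition game_bij :: "'p set \<Rightarrow> ('p \<Rightarrow> 's set) \<Rightarrow> ('p, 's) gbij \<Rightarrow> bool" where
  "game_bij N A g \<longleftrightarrow> fst g permutes N \<and>
     (\<forall>i\<in>N. bij_betw (snd g i) (A i) (A (fst g i))) \<and>
     (\<forall>i x. (i \<notin> N \<or> x \<notin> A i) \<longrightarrow> snd g i x = undefined)"

text \<open>Action on profiles: (g.s)_(pi i) = tau_i (s_i).\<close>

definition act_profile :: "'p set \<Rightarrow> ('p, 's) gbij \<Rightarrow> ('p \<Rightarrow> 's) \<Rightarrow> ('p \<Rightarrow> 's)" where
  "act_profile N g s = (\<lambda>j. if j \<in> N then snd g (inv (fst g) j) (s (inv (fst g) j)) else undefined)"

definition is_aut :: "'p set \<Rightarrow> ('p \<Rightarrow> 's set) \<Rightarrow> ('p \<Rightarrow> ('p \<Rightarrow> 's) \<Rightarrow> real) \<Rightarrow> ('p, 's) gbij \<Rightarrow> bool" where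
  "is_aut N A u g \<longleftrightarrow> game_bij N A g \<and>
     (\<forall>i\<in>N. \<forall>s\<in>PiE N A. u i s = u (fst g i) (act_profile N g s))"

definition gb_id :: "'p set \<Rightarrow> ('p \<Rightarrow> 's set) \<Rightarrow> ('p, 's) gbij" where
  "gb_id N A = (id, \<lambda>i x. if i \<in> N \<and> x \<in> A i then x else undefined)"

text \<open>Composition: first g, then h.\<close>
definition gb_comp :: "'p set \<Rightarrow> ('p \<Rightarrow> 's set) \<Rightarrow> ('p, 's) gbij \<Rightarrow> ('p, 's) gbij \<Rightarrow> ('p, 's) gbij" where
  "gb_comp N A h g = (fst h \<circ> fst g,
     \<lambda>i x. if i \<in> N \<and> x \<in> A i then snd h (fst g i) (snd g i x) else undefined)"

definition gb_inv :: "'p set \<Rightarrow> ('p \<Rightarrow> 's set) \<Rightarrow> ('p, 's) gbij \<Rightarrow> ('p, 's) gbij" where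
  "gb_inv N A g = (inv (fst g),
     \<lambda>j y. if j \<in> N \<and> y \<in> A j
            then inv_into (A (inv (fst g) j)) (snd g (inv (fst g) j)) y else undefined)"

definition symmetry_group :: "'p set \<Rightarrow> ('p \<Rightarrow> 's set) \<Rightarrow> ('p \<Rightarrow> ('p \<Rightarrow> 's) \<Rightarrow> real)
    \<Rightarrow> ('p, 's) gbij set \<Rightarrow> bool" where
  "symmetry_group N A u G \<longleftrightarrow> G \<subseteq> {g. is_aut N A u g} \<and> gb_id N A \<in> G \<and>
     (\<forall>g\<in>G. \<forall>h\<in>G. gb_comp N A h g \<in> G) \<and> (\<forall>g\<in>G. gb_inv N A g \<in> G)"

definition player_transitive :: "'p set \<Rightarrow> ('p, 's) gbij set \<Rightarrow> bool" where
  "player_transitive N G \<longleftrightarrow> (\<forall>i\<in>N. \<forall>j\<in>N. \<exists>g\<in>G. fst g i = j)"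

definition strategy_trivial :: "'p set \<Rightarrow> ('p \<Rightarrow> 's set) \<Rightarrow> ('p, 's) gbij set \<Rightarrow> bool" where
  "strategy_trivial N A G \<longleftrightarrow>
     (\<forall>i\<in>N. \<forall>g\<in>G. fst g i = i \<longrightarrow> (\<forall>x\<in>A i. snd g i x = x))"

definition standard_symmetric :: "'p set \<Rightarrow> ('p \<Rightarrow> 's set) \<Rightarrow> ('p \<Rightarrow> ('p \<Rightarrow> 's) \<Rightarrow> real) \<Rightarrow> bool" where
  "standard_symmetric N A u \<longleftrightarrow>
     (\<exists>G. symmetry_group N A u G \<and> player_transitive N G \<and> strategy_trivial N A G)"

definition matching :: "'p set \<Rightarrow> ('p \<Rightarrow> 's set) \<Rightarrow> ('p \<Rightarrow> 's) set \<Rightarrow> bool" where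
  "matching N A M \<longleftrightarrow> M \<subseteq> PiE N A \<and> (\<forall>i\<in>N. \<forall>a\<in>A i. \<exists>!m. m \<in> M \<and> m i = a)"

definition match_map :: "('p \<Rightarrow> 's) set \<Rightarrow> 'p \<Rightarrow> 'p \<Rightarrow> 's \<Rightarrow> 's" where
  "match_map M i j a = (THE m. m \<in> M \<and> m i = a) j"

definition match_bij :: "'p set \<Rightarrow> ('p \<Rightarrow> 's set) \<Rightarrow> ('p \<Rightarrow> 's) set \<Rightarrow> ('p \<Rightarrow> 'p) \<Rightarrow> ('p, 's) gbij" where
  "match_bij N A M \<pi> = (\<pi>, \<lambda>i x. if i \<in> N \<and> x \<in> A i then match_map M i (\<pi> i) x else undefined)"

definition perm_subgroup :: "'p set \<Rightarrow> ('p \<Rightarrow> 'p) set \<Rightarrow> bool" where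
  "perm_subgroup N H \<longleftrightarrow> (\<forall>\<pi>\<in>H. \<pi> permutes N) \<and> id \<in> H \<and>
     (\<forall>\<pi>\<in>H. \<forall>\<sigma>\<in>H. \<pi> \<circ> \<sigma> \<in> H) \<and> (\<forall>\<pi>\<in>H. inv \<pi> \<in> H)"

definition transitive_on :: "'p set \<Rightarrow> ('p \<Rightarrow> 'p) set \<Rightarrow> bool" where
  "transitive_on N H \<longleftrightarrow> (\<forall>i\<in>N. \<forall>j\<in>N. \<exists>\<pi>\<in>H. \<pi> i = j)"

end

theory Submission
  imports Defs
begin

text \<open>Given a matching \<open>M\<close>, the map \<open>\<pi> \<mapsto> M\<^sub>\<pi>\<close> on permutations of \<open>N\<close> respects identity,
  composition and inverses, so the image of a transitive \<open>H\<close> is a player transitive symmetry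
  group; it is strategy trivial because \<open>M\<^sub>i\<^sub>i\<close> is the identity.
  Conversely, in a strategy trivial symmetry group \<open>G\<close> the strategy map of \<open>g\<close> at player \<open>i\<close>
  depends only on \<open>g.i\<close>, since \<open>h\<^sup>-\<^sup>1 g\<close> stabilises \<open>i\<close> whenever \<open>g.i = h.i\<close>. Fixing a player
  \<open>i\<^sub>0\<close> and elements \<open>f\<^sub>j \<in> G\<close> with \<open>f\<^sub>j.i\<^sub>0 = j\<close>, the tuples \<open>(f\<^sub>j.a)\<^sub>j\<close> for \<open>a \<in> A\<^sub>i\<^sub>0\<close> form a
  matching \<open>M\<close> for which every \<open>g \<in> G\<close> is \<open>M\<^sub>\<pi>\<close> with \<open>\<pi>\<close> the player part of \<open>g\<close>.\<close>

lemma matching_the_tuple: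
  assumes "matching N A M" "i \<in> N" "x \<in> A i"
  shows "(THE m. m \<in> M \<and> m i = x) \<in> M" "(THE m. m \<in> M \<and> m i = x) i = x"
proof -
  have "\<exists>!m. m \<in> M \<and> m i = x" using assms unfolding matching_def by blast
  then have "(THE m. m \<in> M \<and> m i = x) \<in> M \<and> (THE m. m \<in> M \<and> m i = x) i = x"
    by (rule theI')
  then show "(THE m. m \<in> M \<and> m i = x) \<in> M" "(THE m. m \<in> M \<and> m i = x) i = x"
    by simp_all
qed

lemma match_map_tuple:
  assumes "matching N A M" "m \<in> M" "i \<in> N"
  shows "match_map M i j (m i) = m j"
proof -
  have "m i \<in> A i" using assms unfolding matching_def by (auto simp: PiE_iff)
  then have "\<exists>!m'. m' \<in> M \<and> m' i = m i" using assms unfolding matching_def by blast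
  then have "(THE m'. m' \<in> M \<and> m' i = m i) = m" using assms(2) by (simp add: the1_equality)
  then show ?thesis unfolding match_map_def by simp
qed

lemma match_map_in:
  assumes "matching N A M" "i \<in> N" "j \<in> N" "x \<in> A i"
  shows "match_map M i j x \<in> A j"
  using matching_the_tuple[OF assms(1,2,4)] assms unfolding match_map_def matching_def
  by (auto simp: PiE_iff)

lemma match_map_self:
  assumes "matching N A M" "i \<in> N" "x \<in> A i"
  shows "match_map M i i x = x"
  using matching_the_tuple[OF assms] unfolding match_map_def by simp

lemma match_map_trans:
  assumes "matching N A M" "i \<in> N" "j \<in> N" "x \<in> A i"
  shows "match_map M j k (match_map M i j x) = match_map M i k x"
proof -
  define m where "m = (THE m. m \<in> M \<and> m i = x)"
  have m: "m \<in> M" "m i = x" using matching_the_tuple[OF assms(1,2,4)] unfolding m_def by auto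
  show ?thesis using match_map_tuple[OF assms(1) m(1)] assms(2,3) m(2) by metis
qed

lemma match_bij_id:
  assumes "matching N A M"
  shows "match_bij N A M id = gb_id N A"
  unfolding match_bij_def gb_id_def using match_map_self[OF assms] by (auto intro!: ext)

lemma match_bij_comp:
  assumes M: "matching N A M" and \<pi>: "\<pi> permutes N"
  shows "gb_comp N A (match_bij N A M \<sigma>) (match_bij N A M \<pi>) = match_bij N A M (\<sigma> \<circ> \<pi>)"
proof -
  have "snd (gb_comp N A (match_bij N A M \<sigma>) (match_bij N A M \<pi>)) i x =
        snd (match_bij N A M (\<sigma> \<circ> \<pi>)) i x" for i x
  proof (cases "i \<in> N \<and> x \<in> A i")
    case True
    have "\<pi> i \<in> N" using \<pi> True by (simp add: permutes_in_image)
    with True show ?thesis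
      using match_map_in[OF M] match_map_trans[OF M, of i "\<pi> i" x "\<sigma> (\<pi> i)"]
      unfolding gb_comp_def match_bij_def by simp
  qed (auto simp: gb_comp_def match_bij_def)
  then show ?thesis unfolding gb_comp_def match_bij_def by (simp add: prod_eq_iff ext)
qed

lemma match_bij_inv:
  assumes M: "matching N A M" and \<pi>: "\<pi> permutes N"
  shows "gb_inv N A (match_bij N A M \<pi>) = match_bij N A M (inv \<pi>)"
proof -
  have "snd (gb_inv N A (match_bij N A M \<pi>)) j y = snd (match_bij N A M (inv \<pi>)) j y" for j y
  proof (cases "j \<in> N \<and> y \<in> A j")
    case True
    define k where "k = inv \<pi> j"
    have k: "k \<in> N" "\<pi> k = j"
      unfolding k_def using \<pi> True by (auto simp: permutes_in_image permutes_inv permutes_inverses(1))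
    have "inj_on (match_map M k j) (A k)"
    proof (rule inj_onI)
      fix x x' assume "x \<in> A k" "x' \<in> A k" "match_map M k j x = match_map M k j x'"
      then show "x = x'"
        using True k(1) match_map_trans[OF M, of k j _ k] match_map_self[OF M, of k] by metis
    qed
    moreover have "match_map M j k y \<in> A k" using match_map_in[OF M] True k(1) by blast
    moreover have "match_map M k j (match_map M j k y) = y"
      using True match_map_trans[OF M, of j k y j] match_map_self[OF M, of j y] k(1) by simp
    ultimately have "inv_into (A k) (match_map M k j) y = match_map M j k y"
      by (rule inv_into_f_eq)
    moreover have "inv_into (A k) (\<lambda>x. if k \<in> N \<and> x \<in> A k then match_map M k j x else undefined) y
                   = inv_into (A k) (match_map M k j) y"
      using k(1) unfolding inv_into_def by (intro arg_cong[where f = Eps]) auto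
    ultimately show ?thesis
      using True k(1) by (simp add: gb_inv_def match_bij_def flip: k_def, subst k(2), simp)
  qed (auto simp: gb_inv_def match_bij_def)
  then show ?thesis unfolding gb_inv_def match_bij_def by (simp add: prod_eq_iff ext)
qed

lemma matching_imp_standard_symmetric:
  assumes M: "matching N A M" and H: "perm_subgroup N H" and tr: "transitive_on N H"
    and aut: "\<forall>\<pi>\<in>H. is_aut N A u (match_bij N A M \<pi>)"
  shows "standard_symmetric N A u"
proof -
  define G where "G = match_bij N A M ` H"
  have perm: "\<pi> permutes N" if "\<pi> \<in> H" for \<pi> using H that unfolding perm_subgroup_def by blast
  have "symmetry_group N A u G"
    unfolding symmetry_group_def G_def
    using H aut match_bij_id[OF M] match_bij_comp[OF M perm] match_bij_inv[OF M perm]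
    unfolding perm_subgroup_def by (auto intro!: image_eqI)
  moreover have "player_transitive N G"
    using tr unfolding player_transitive_def transitive_on_def G_def by (force simp: match_bij_def)
  moreover have "strategy_trivial N A G"
    unfolding strategy_trivial_def G_def using match_map_self[OF M] by (auto simp: match_bij_def)
  ultimately show ?thesis unfolding standard_symmetric_def by blast
qed

lemma symmetry_group_game_bij:
  "symmetry_group N A u G \<Longrightarrow> g \<in> G \<Longrightarrow> game_bij N A g"
  unfolding symmetry_group_def is_aut_def by auto

lemma symmetry_group_perm_subgroup:
  assumes sg: "symmetry_group N A u G"
  shows "perm_subgroup N (fst ` G)"
proof -
  have closed: "gb_id N A \<in> G" "\<And>g h. g \<in> G \<Longrightarrow> h \<in> G \<Longrightarrow> gb_comp N A g h \<in> G"
    "\<And>g. g \<in> G \<Longrightarrow> gb_inv N A g \<in> G"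
    using sg unfolding symmetry_group_def by blast+
  have "fst (gb_id N A) = id" "\<And>g h. fst g \<circ> fst h = fst (gb_comp N A g h)"
    "\<And>g. inv (fst g) = fst (gb_inv N A g)"
    by (simp_all add: gb_id_def gb_comp_def gb_inv_def)
  with closed have "id \<in> fst ` G" "\<And>g h. g \<in> G \<Longrightarrow> h \<in> G \<Longrightarrow> fst g \<circ> fst h \<in> fst ` G"
    "\<And>g. g \<in> G \<Longrightarrow> inv (fst g) \<in> fst ` G"
    by (metis image_eqI)+
  moreover have "\<forall>\<pi>\<in>fst ` G. \<pi> permutes N"
    using symmetry_group_game_bij[OF sg] unfolding game_bij_def by auto
  ultimately show ?thesis unfolding perm_subgroup_def by blast
qed

lemma strategy_trivial_strategy_map_unique:
  assumes sg: "symmetry_group N A u G" and st: "strategy_trivial N A G"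
    and i: "i \<in> N" and g: "g \<in> G" and h: "h \<in> G" and gh: "fst g i = fst h i"
    and a: "a \<in> A i"
  shows "snd g i a = snd h i a"
proof -
  have gb: "game_bij N A g" "game_bij N A h" using symmetry_group_game_bij[OF sg] g h by auto
  define j where "j = fst g i"
  have j: "j \<in> N" using gb i unfolding j_def game_bij_def by (simp add: permutes_in_image)
  have hj: "inv (fst h) j = i"
    using gb unfolding j_def gh game_bij_def by (meson permutes_inverses(2))
  have bg: "bij_betw (snd g i) (A i) (A j)" and bh: "bij_betw (snd h i) (A i) (A j)"
    using gb i gh unfolding game_bij_def j_def by auto
  have y: "snd g i a \<in> A j" using bg a bij_betwE by blast
  define k where "k = gb_comp N A (gb_inv N A h) g"
  have "k \<in> G" using sg g h unfolding symmetry_group_def k_def by blast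
  moreover have "fst k i = i" unfolding k_def gb_comp_def gb_inv_def using hj j_def by simp
  ultimately have "snd k i a = a" using st i a unfolding strategy_trivial_def by blast
  moreover have "snd k i a = inv_into (A i) (snd h i) (snd g i a)"
    unfolding k_def gb_comp_def gb_inv_def using i a j y hj j_def by simp
  moreover have "snd g i a \<in> snd h i ` A i" using bh y bij_betw_imp_surj_on by blast
  ultimately show ?thesis by (metis f_inv_into_f)
qed

lemma matching_of_bijections:
  assumes i0: "i0 \<in> N" and b: "\<And>j. j \<in> N \<Longrightarrow> bij_betw (b j) (A i0) (A j)"
  shows "matching N A ((\<lambda>a. restrict (\<lambda>j. b j a) N) ` A i0)"
  unfolding matching_def
proof (intro conjI ballI)
  have "restrict (\<lambda>j. b j a) N \<in> PiE N A" if "a \<in> A i0" for a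
    using b that by (auto simp: PiE_iff dest: bij_betw_apply)
  then show "(\<lambda>a. restrict (\<lambda>j. b j a) N) ` A i0 \<subseteq> PiE N A" by blast
  show "\<exists>!m. m \<in> (\<lambda>a. restrict (\<lambda>j. b j a) N) ` A i0 \<and> m i = x" if i: "i \<in> N" and x: "x \<in> A i" for i x
  proof -
    obtain a where a: "a \<in> A i0" "b i a = x"
      using b[OF i] x by (metis bij_betw_imp_surj_on imageE)
    have "a' = a" if "a' \<in> A i0" "b i a' = x" for a'
      using b[OF i] a that unfolding bij_betw_def inj_on_def by blast
    with a i show ?thesis by (intro ex1I[of _ "restrict (\<lambda>j. b j a) N"]) force+
  qed
qed

lemma strategy_trivial_ex_matching:
  assumes sg: "symmetry_group N A u G" and st: "strategy_trivial N A G"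
    and pt: "player_transitive N G" and "N \<noteq> {}"
  shows "\<exists>M. matching N A M \<and> (\<forall>g\<in>G. match_bij N A M (fst g) = g)"
proof -
  obtain i0 where i0: "i0 \<in> N" using \<open>N \<noteq> {}\<close> by blast
  obtain f where f: "\<And>j. j \<in> N \<Longrightarrow> f j \<in> G \<and> fst (f j) i0 = j"
    using pt i0 unfolding player_transitive_def by metis
  define M where "M = (\<lambda>a. restrict (\<lambda>j. snd (f j) i0 a) N) ` A i0"
  have b: "bij_betw (snd (f j) i0) (A i0) (A j)" if "j \<in> N" for j
    using symmetry_group_game_bij[OF sg, of "f j"] f[OF that] i0 unfolding game_bij_def by auto
  have M: "matching N A M"
    unfolding M_def using matching_of_bijections[where b = "\<lambda>j. snd (f j) i0", OF i0 b] .
  have "match_bij N A M (fst g) = g" if g: "g \<in> G" for g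
  proof -
    have gb: "game_bij N A g" using symmetry_group_game_bij[OF sg g] .
    have "match_map M i (fst g i) x = snd g i x" if i: "i \<in> N" and x: "x \<in> A i" for i x
    proof -
      obtain a where a: "a \<in> A i0" "snd (f i) i0 a = x"
        using b[OF i] x by (metis bij_betw_imp_surj_on imageE)
      have gi: "fst g i \<in> N" using gb i unfolding game_bij_def by (simp add: permutes_in_image)
      have fg: "gb_comp N A g (f i) \<in> G" using sg g f[OF i] unfolding symmetry_group_def by blast
      have "fst (f (fst g i)) i0 = fst (gb_comp N A g (f i)) i0"
        using f[OF gi] f[OF i] unfolding gb_comp_def by simp
      then have same: "snd (f (fst g i)) i0 a = snd (gb_comp N A g (f i)) i0 a"
        using strategy_trivial_strategy_map_unique[OF sg st i0 _ fg _ a(1)] f[OF gi] by blast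
      have "restrict (\<lambda>j. snd (f j) i0 a) N \<in> M" using a(1) unfolding M_def by blast
      from match_map_tuple[OF M this i, of "fst g i"]
      have "match_map M i (fst g i) x = snd (f (fst g i)) i0 a" using a(2) i gi by simp
      also have "\<dots> = snd g i x" unfolding same gb_comp_def using i0 a f[OF i] by simp
      finally show ?thesis .
    qed
    then have "snd (match_bij N A M (fst g)) = snd g"
      using gb unfolding match_bij_def game_bij_def by (auto intro!: ext)
    then show ?thesis unfolding match_bij_def by (simp add: prod_eq_iff)
  qed
  with M show ?thesis by blast
qed

lemma standard_symmetric_imp_matching:
  assumes "N \<noteq> {}" and "standard_symmetric N A u"
  shows "\<exists>M H. matching N A M \<and> perm_subgroup N H \<and> transitive_on N H \<and>
           (\<forall>\<pi>\<in>H. is_aut N A u (match_bij N A M \<pi>))"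
proof -
  obtain G where sg: "symmetry_group N A u G" and pt: "player_transitive N G"
    and st: "strategy_trivial N A G" using assms(2) unfolding standard_symmetric_def by blast
  obtain M where M: "matching N A M" and MG: "\<forall>g\<in>G. match_bij N A M (fst g) = g"
    using strategy_trivial_ex_matching[OF sg st pt assms(1)] by blast
  have "is_aut N A u (match_bij N A M (fst g))" if "g \<in> G" for g
    using that MG sg unfolding symmetry_group_def by auto
  moreover have "transitive_on N (fst ` G)"
    using pt unfolding transitive_on_def player_transitive_def by force
  ultimately show ?thesis using M symmetry_group_perm_subgroup[OF sg] by blast
qed

theorem mainTheorem11:
  fixes N :: "'p set" and A :: "'p \<Rightarrow> 's set" and u :: "'p \<Rightarrow> ('p \<Rightarrow> 's) \<Rightarrow> real"
  assumes "game N A u"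
  shows "standard_symmetric N A u \<longleftrightarrow>
    (\<exists>M H. matching N A M \<and> perm_subgroup N H \<and> transitive_on N H \<and>
       (\<forall>\<pi>\<in>H. is_aut N A u (match_bij N A M \<pi>)))"
proof -
  have "N \<noteq> {}" using assms unfolding game_def by auto
  then show ?thesis
    by (metis matching_imp_standard_symmetric standard_symmetric_imp_matching)
qed

end
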